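(* (ZFC.) Let $F$ be any set of functions on $[0,1]$, each of arity $\alpha$ with $0<\alpha\le\omega$ (i.e. with finitely or countably many arguments), such that $|F|\le\mathfrak{c}$. Then $\mathsf{Agg}$ is not generated by $F$ as a $\sigma$-clone: not every aggregation function of finite arity belongs to the $\sigma$-clone generated by $F$.
   Context: $\mathfrak{c}=2^{\aleph_0}$; the axiom of choice is assumed. $\omega$ is the first infinite ordinal. An $n$-ary aggregation function on $[0,1]$ is a function $f\colon[0,1]^n\to[0,1]$ nondecreasing in each coordinate with $f(0,\dots,0)=0$, $f(1,\dots,1)=1$; $\mathsf{Agg}$ is the set of all aggregation functions of all finite arities. For an $\alpha$-ary $f$ and $\beta$-ary functions $g_i$, $i<\alpha$ ($0<\alpha,\beta\le\omega$), the composition $f\circ(g_i:i<\alpha)$ is $\mathbf{x}\mapsto f((g_i(\mathbf{x}))_{i<\alpha})$. A $\sigma$-clone is a set of functions on $[0,1]$ of arities $0<\alpha\le\omega$ containing all projections and closed under such compositions; the $\sigma$-clone generated by $F$ is the smallest one containing $F$. *)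

theory Defs
  imports Complex_Main "HOL-Library.FuncSet" "HOL-Library.Extended_Nat" "HOL-Library.Equipollence"
begin

text \<open>An operation of arity alpha (0 < alpha \<le> omega, omega rendered as \<infinity>) on [0,1] is a pair
  (alpha, f) where f is an extensional function from [0,1]^{i. i < alpha} to [0,1].\<close>

type_synonym op = "enat \<times> ((nat \<Rightarrow> real) \<Rightarrow> real)"

definition ar :: "enat \<Rightarrow> nat set" where
  "ar \<alpha> = {i. enat i < \<alpha>}"

definition Dom :: "enat \<Rightarrow> (nat \<Rightarrow> real) set" where
  "Dom \<alpha> = PiE (ar \<alpha>) (\<lambda>_. {0..1})"

definition Ops :: "op set" where
  "Ops = {(\<alpha>, f). 0 < \<alpha> \<and> f \<in> Dom \<alpha> \<rightarrow>\<^sub>E {0..1}}"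

definition proj :: "enat \<Rightarrow> nat \<Rightarrow> op" where
  "proj \<beta> i = (\<beta>, \<lambda>x\<in>Dom \<beta>. x i)"

definition compose :: "op \<Rightarrow> enat \<Rightarrow> (nat \<Rightarrow> op) \<Rightarrow> op" where
  "compose f \<beta> g = (\<beta>, \<lambda>x\<in>Dom \<beta>. snd f (\<lambda>i\<in>ar (fst f). snd (g i) x))"

definition sigma_clone :: "op set \<Rightarrow> bool" where
  "sigma_clone C \<longleftrightarrow> C \<subseteq> Ops
     \<and> (\<forall>\<beta> i. 0 < \<beta> \<and> i \<in> ar \<beta> \<longrightarrow> proj \<beta> i \<in> C)
     \<and> (\<forall>f \<beta> g. f \<in> C \<and> (\<forall>i\<in>ar (fst f). g i \<in> C \<and> fst (g i) = \<beta>)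
                 \<longrightarrow> compose f \<beta> g \<in> C)"

definition sigma_clone_gen :: "op set \<Rightarrow> op set" where
  "sigma_clone_gen F = \<Inter>{C. sigma_clone C \<and> F \<subseteq> C}"

definition aggregation :: "nat \<Rightarrow> ((nat \<Rightarrow> real) \<Rightarrow> real) \<Rightarrow> bool" where
  "aggregation n f \<longleftrightarrow> f \<in> Dom (enat n) \<rightarrow>\<^sub>E {0..1}
     \<and> (\<forall>x\<in>Dom (enat n). \<forall>y\<in>Dom (enat n). (\<forall>i<n. x i \<le> y i) \<longrightarrow> f x \<le> f y)
     \<and> f (\<lambda>i\<in>ar (enat n). 0) = 0 \<and> f (\<lambda>i\<in>ar (enat n). 1) = 1"

definition Agg :: "op set" where
  "Agg = {(enat n, f) | n f. 0 < n \<and> aggregation n f}"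

end

theory Submission
  imports Defs "HOL-Library.Countable" "HOL-Analysis.Abstract_Topology_2"
begin

text \<open>Every member of the \<sigma>-clone generated by F is the value of a term: a well-founded tree
  with countable branching whose leaves are projections or members of F. Once the members of F
  are coded by sets of naturals, such a tree is determined by its set of labelled paths, a subset
  of a countable set; so there are at most continuum many terms, and hence at most continuum many
  generated functions. On the other hand, for S \<subseteq> [0,1] the binary aggregation function that is
  0 below the antidiagonal x + y = 1, 1 above it, and takes the value 2/3 or 1/3 at (a, 1 - a)
  according to whether a \<in> S, determines S; so Agg has at least 2^c > c members.\<close>

datatype 'a op_term = Var enat nat | Atom 'a | Comp "'a op_term" enat "nat \<Rightarrow> 'a op_term"

datatype label = Var_label enat nat | Atom_label | Atom_elem nat | Comp_label enat

instance label :: countable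
  by countable_datatype

text \<open>\<^const>\<open>Atom_label\<close> marks a leaf \<^term>\<open>Atom S\<close> even when S is empty.\<close>

primrec tree_code :: "nat set op_term \<Rightarrow> nat list \<Rightarrow> label \<Rightarrow> bool" where
  "tree_code (Var b i) p x \<longleftrightarrow> p = [] \<and> x = Var_label b i"
| "tree_code (Atom S) p x \<longleftrightarrow> p = [] \<and> (x = Atom_label \<or> (\<exists>k\<in>S. x = Atom_elem k))"
| "tree_code (Comp t b s) p x \<longleftrightarrow>
     (case p of [] \<Rightarrow> x = Comp_label b | 0 # q \<Rightarrow> tree_code t q x | Suc m # q \<Rightarrow> tree_code (s m) q x)"

lemma inj_tree_code: "inj tree_code"
proof (rule injI)
  fix t t' :: "nat set op_term"
  assume "tree_code t = tree_code t'"
  then show "t = t'"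
  proof (induction t arbitrary: t')
    case (Var b i)
    then show ?case
      by (cases t') (auto dest!: fun_cong[where x="[]"] dest: fun_cong[where x="Var_label b i"])
  next
    case (Atom S)
    from Atom have "tree_code (Atom S) [] = tree_code t' []"
      by (rule fun_cong)
    then show ?case
      by (cases t') (auto dest: fun_cong[where x=Atom_label] fun_cong[where x="Atom_elem _"])
  next
    case (Comp t b s)
    from Comp.prems have root: "tree_code (Comp t b s) [] = tree_code t' []"
      by (rule fun_cong)
    then obtain u c r where t': "t' = Comp u c r"
      by (cases t') (auto dest: fun_cong[where x="Comp_label b"])
    with root have "c = b"
      by (auto dest: fun_cong[where x="Comp_label b"])
    moreover have "tree_code u = tree_code t"
      using fun_cong[OF Comp.prems, of "0 # _"] t' by auto
    moreover have "tree_code (r m) = tree_code (s m)" for m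
      using fun_cong[OF Comp.prems, of "Suc m # _"] t' by auto
    ultimately show ?case
      using Comp.IH t' by auto
  qed
qed

lemma op_term_lepoll_nat_sets: "(UNIV :: nat set op_term set) \<lesssim> (UNIV :: nat set set)"
proof -
  have "inj (\<lambda>t. to_nat ` {(p, x). tree_code t p x})"
  proof (rule injI)
    fix t t' :: "nat set op_term"
    assume "to_nat ` {(p, x). tree_code t p x} = to_nat ` {(p, x). tree_code t' p x}"
    then have "{(p, x). tree_code t p x} = {(p, x). tree_code t' p x}"
      by (simp add: inj_image_eq_iff)
    then have "tree_code t p x \<longleftrightarrow> tree_code t' p x" for p x
      by (simp add: set_eq_iff)
    then have "tree_code t = tree_code t'"
      by blast
    then show "t = t'"
      by (rule injD[OF inj_tree_code])
  qed
  then show ?thesis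
    unfolding lepoll_def by blast
qed

lemma op_terms_over_lepoll_nat_sets:
  assumes "F \<lesssim> (UNIV :: nat set set)"
  shows "{t. set_op_term t \<subseteq> F} \<lesssim> (UNIV :: nat set set)"
proof -
  obtain j :: "'a \<Rightarrow> nat set" where j: "inj_on j F"
    using assms unfolding lepoll_def by blast
  have "inj_on (map_op_term j) {t. set_op_term t \<subseteq> F}"
  proof (rule inj_onI)
    fix t t'
    assume t: "t \<in> {t. set_op_term t \<subseteq> F}" and t': "t' \<in> {t. set_op_term t \<subseteq> F}"
      and eq: "map_op_term j t = map_op_term j t'"
    show "t = t'"
    proof (rule op_term.inj_map_strong[OF _ eq])
      fix z z'
      assume "z \<in> set_op_term t" "z' \<in> set_op_term t'" "j z = j z'"
      then show "z = z'"
        using t t' j by (blast dest: inj_onD)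
    qed
  qed
  then have "{t. set_op_term t \<subseteq> F} \<lesssim> (UNIV :: nat set op_term set)"
    unfolding lepoll_def by blast
  also have "\<dots> \<lesssim> (UNIV :: nat set set)"
    by (rule op_term_lepoll_nat_sets)
  finally show ?thesis .
qed

primrec eval_op_term :: "op op_term \<Rightarrow> op" where
  "eval_op_term (Var b i) = proj b i"
| "eval_op_term (Atom f) = f"
| "eval_op_term (Comp t b s) = compose (eval_op_term t) b (\<lambda>i. eval_op_term (s i))"

lemma proj_in_Ops: "0 < b \<Longrightarrow> i \<in> ar b \<Longrightarrow> proj b i \<in> Ops"
  unfolding Ops_def proj_def Dom_def by auto

lemma compose_in_Ops:
  assumes f: "f \<in> Ops" and g: "\<And>i. i \<in> ar (fst f) \<Longrightarrow> g i \<in> Ops \<and> fst (g i) = b"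
  shows "compose f b g \<in> Ops"
proof -
  obtain a h where f_eq: "f = (a, h)" and "0 < a" and h: "h \<in> Dom a \<rightarrow>\<^sub>E {0..1}"
    using f unfolding Ops_def by auto
  have "0 \<in> ar a"
    using \<open>0 < a\<close> by (simp add: ar_def zero_enat_def[symmetric])
  then have "0 < b"
    using g[of 0] f_eq unfolding Ops_def by auto
  have "(\<lambda>i\<in>ar a. snd (g i) x) \<in> Dom a" if "x \<in> Dom b" for x
    using g f_eq that unfolding Dom_def Ops_def by fastforce
  then have "(\<lambda>x\<in>Dom b. h (\<lambda>i\<in>ar a. snd (g i) x)) \<in> Dom b \<rightarrow>\<^sub>E {0..1}"
    using h by auto
  then show ?thesis
    using \<open>0 < b\<close> f_eq unfolding compose_def Ops_def by simp
qed

lemma compose_cong: "(\<And>i. i \<in> ar (fst f) \<Longrightarrow> g i = g' i) \<Longrightarrow> compose f b g = compose f b g'"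
  unfolding compose_def by (simp cong: restrict_cong)

lemma sigma_clone_gen_subset_eval_op_term:
  assumes "F \<subseteq> Ops"
  shows "sigma_clone_gen F \<subseteq> eval_op_term ` {t. set_op_term t \<subseteq> F}"
proof -
  let ?T = "eval_op_term ` {t. set_op_term t \<subseteq> F}"
  have "sigma_clone (Ops \<inter> ?T)"
    unfolding sigma_clone_def
  proof (intro conjI allI impI)
    fix b i
    assume "0 < b \<and> i \<in> ar b"
    then have "proj b i \<in> Ops"
      by (blast intro: proj_in_Ops)
    moreover have "proj b i \<in> ?T"
      by (rule image_eqI[where x = "Var b i"]) simp_all
    ultimately show "proj b i \<in> Ops \<inter> ?T" ..
  next
    fix f b g
    assume fg: "f \<in> Ops \<inter> ?T \<and> (\<forall>i\<in>ar (fst f). g i \<in> Ops \<inter> ?T \<and> fst (g i) = b)"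
    then obtain t where t: "set_op_term t \<subseteq> F" "eval_op_term t = f"
      by blast
    have "\<forall>i. \<exists>u. set_op_term u \<subseteq> F \<and> (i \<in> ar (fst f) \<longrightarrow> eval_op_term u = g i)"
    proof
      fix i
      show "\<exists>u. set_op_term u \<subseteq> F \<and> (i \<in> ar (fst f) \<longrightarrow> eval_op_term u = g i)"
      proof (cases "i \<in> ar (fst f)")
        case True
        with fg obtain u where "set_op_term u \<subseteq> F" "g i = eval_op_term u"
          by blast
        then show ?thesis
          by auto
      qed (intro exI[of _ "Var b 0"], simp)
    qed
    then obtain s where s: "\<And>i. set_op_term (s i) \<subseteq> F"
      and s_eval: "\<And>i. i \<in> ar (fst f) \<Longrightarrow> eval_op_term (s i) = g i"
      by metis
    have "compose f b g = eval_op_term (Comp t b s)"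
      using t(2) s_eval by (auto intro: compose_cong)
    moreover have "set_op_term (Comp t b s) \<subseteq> F"
      using t(1) s by auto
    moreover have "compose f b g \<in> Ops"
      using fg by (auto intro: compose_in_Ops)
    ultimately show "compose f b g \<in> Ops \<inter> ?T"
      by (blast intro: image_eqI)
  qed (rule Int_lower1)
  moreover have "F \<subseteq> Ops \<inter> ?T"
  proof
    fix f
    assume "f \<in> F"
    then have "f \<in> ?T"
      by (intro image_eqI[where x = "Atom f"]) simp_all
    with \<open>f \<in> F\<close> assms show "f \<in> Ops \<inter> ?T"
      by blast
  qed
  ultimately show ?thesis
    unfolding sigma_clone_gen_def by blast
qed

lemma sigma_clone_gen_lepoll_reals:
  assumes "F \<subseteq> Ops" and "F \<lesssim> (UNIV :: real set)"
  shows "sigma_clone_gen F \<lesssim> (UNIV :: real set)"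
proof -
  have reals_nat_sets: "(UNIV :: real set) \<approx> (UNIV :: nat set set)"
    by (rule eqpoll_sym[OF nat_sets_eqpoll_reals])
  have "sigma_clone_gen F \<lesssim> eval_op_term ` {t. set_op_term t \<subseteq> F}"
    using sigma_clone_gen_subset_eval_op_term[OF assms(1)] by (rule subset_imp_lepoll)
  also have "\<dots> \<lesssim> {t. set_op_term t \<subseteq> F}"
    by (rule image_lepoll)
  also have "\<dots> \<lesssim> (UNIV :: nat set set)"
    using assms(2) reals_nat_sets
    by (intro op_terms_over_lepoll_nat_sets) (metis eqpoll_imp_lepoll lepoll_trans)
  also have "\<dots> \<lesssim> (UNIV :: real set)"
    using reals_nat_sets by (metis eqpoll_imp_lepoll eqpoll_sym)
  finally show ?thesis .
qed

definition antidiagonal_step :: "real set \<Rightarrow> real \<Rightarrow> real \<Rightarrow> real" where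
  "antidiagonal_step S a c =
     (if a + c < 1 then 0 else if a + c > 1 then 1 else if a \<in> S then 2/3 else 1/3)"

definition antidiagonal_agg :: "real set \<Rightarrow> (nat \<Rightarrow> real) \<Rightarrow> real" where
  "antidiagonal_agg S = (\<lambda>x\<in>Dom (enat 2). antidiagonal_step S (x 0) (x 1))"

lemma antidiagonal_step_mono:
  assumes "a \<le> a'" and "c \<le> c'"
  shows "antidiagonal_step S a c \<le> antidiagonal_step S a' c'"
proof (cases "a + c = 1 \<and> a' + c' = 1")
  case True
  then have "a' = a"
    using assms by linarith
  with True show ?thesis
    by (simp add: antidiagonal_step_def)
next
  case False
  with assms show ?thesis
    by (auto simp: antidiagonal_step_def)
qed

lemma ar_enat: "ar (enat n) = {..<n}"
  by (auto simp: ar_def)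

lemma aggregation_antidiagonal_agg: "aggregation 2 (antidiagonal_agg S)"
  unfolding aggregation_def
proof (intro conjI ballI impI)
  show "antidiagonal_agg S \<in> Dom (enat 2) \<rightarrow>\<^sub>E {0..1}"
    unfolding antidiagonal_agg_def antidiagonal_step_def by auto
next
  fix x y
  assume "x \<in> Dom (enat 2)" "y \<in> Dom (enat 2)" "\<forall>i<2. x i \<le> y i"
  then show "antidiagonal_agg S x \<le> antidiagonal_agg S y"
    unfolding antidiagonal_agg_def by (simp add: antidiagonal_step_mono)
next
  have "(\<lambda>i\<in>ar (enat 2). c) \<in> Dom (enat 2)" if "c \<in> {0..1}" for c :: real
    using that unfolding Dom_def by auto
  then show "antidiagonal_agg S (\<lambda>i\<in>ar (enat 2). 0) = 0"
    and "antidiagonal_agg S (\<lambda>i\<in>ar (enat 2). 1) = 1"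
    unfolding antidiagonal_agg_def antidiagonal_step_def by (simp_all add: ar_enat)
qed

lemma inj_on_antidiagonal_agg: "inj_on antidiagonal_agg (Pow {0..1})"
proof (rule inj_onI)
  fix S S'
  assume S: "S \<in> Pow {0..1}" and S': "S' \<in> Pow {0..1}"
    and eq: "antidiagonal_agg S = antidiagonal_agg S'"
  have "a \<in> S \<longleftrightarrow> a \<in> S'" if a: "a \<in> {0..1}" for a
  proof -
    define x where "x = (\<lambda>i\<in>ar (enat 2). if i = 0 then a else 1 - a)"
    have "x \<in> Dom (enat 2)"
      using a unfolding x_def Dom_def by (auto simp: ar_enat)
    moreover have "x 0 = a" "x 1 = 1 - a"
      unfolding x_def by (auto simp: ar_enat)
    ultimately have "antidiagonal_step S a (1 - a) = antidiagonal_step S' a (1 - a)"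
      using fun_cong[OF eq, of x] unfolding antidiagonal_agg_def by simp
    then show ?thesis
      unfolding antidiagonal_step_def by (auto split: if_splits)
  qed
  then show "S = S'"
    using S S' by blast
qed

lemma reals_lesspoll_Agg: "(UNIV :: real set) \<prec> Agg"
proof -
  have "(UNIV :: real set) \<approx> {0..1::real}"
    by (simp add: closed_interval_eqpoll_reals eqpoll_sym)
  also have "\<dots> \<prec> Pow {0..1::real}"
    by (rule lesspoll_Pow_self)
  also have "\<dots> \<lesssim> Agg"
    unfolding lepoll_def
  proof (intro exI conjI)
    show "inj_on (\<lambda>S. (enat 2, antidiagonal_agg S)) (Pow {0..1})"
      using inj_on_antidiagonal_agg by (auto simp: inj_on_def)
    show "(\<lambda>S. (enat 2, antidiagonal_agg S)) ` Pow {0..1} \<subseteq> Agg"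
      unfolding Agg_def using aggregation_antidiagonal_agg by fastforce
  qed
  finally show ?thesis .
qed

theorem corollary2:
  fixes F :: "op set"
  assumes "F \<subseteq> Ops"
    and "F \<lesssim> (UNIV :: real set)"
  shows "\<not> Agg \<subseteq> sigma_clone_gen F"
proof
  assume "Agg \<subseteq> sigma_clone_gen F"
  then have "Agg \<lesssim> (UNIV :: real set)"
    using sigma_clone_gen_lepoll_reals[OF assms] by (metis subset_imp_lepoll lepoll_trans)
  with reals_lesspoll_Agg show False
    using lesspoll_trans2 by blast
qed

end
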